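(* Let $\alpha$ be a nonzero real number and let $\gamma\colon I\to\mathbb S^2$ be a properly immersed $\alpha$-stationary curve. Suppose that the north pole $N$ is not an adherent point of $\gamma(I)$ and that $\gamma(I)\cap\mathbb S^2_+\neq\emptyset$, where $\mathbb S^2_+=\mathbb S^2\cap\{z>0\}$. Then $\alpha>-1$.
   Context: $\mathbb S^2\subset\mathbb R^3$ is the unit sphere with the Euclidean inner product $\langle,\rangle$. It is parametrized by $\Psi(u,v)=(\sin u\cos v,\sin u\sin v,\cos u)$, and $N=(0,0,1)$. The spherical distance from $\Psi(u,v)$ to $N$ is $u\in[0,\pi]$. For a curve $\gamma(t)=\Psi(u(t),v(t))$ avoiding $N$, the energy is $$E_\alpha[\gamma]=\int_\gamma\mathsf d^\alpha ds=\int u^\alpha\sqrt{u'^2+\sin^2(u)v'^2}\,dt,$$ where $\mathsf d$ is the distance to $N$. The curve is $\alpha$-stationary if it is a critical point of $E_\alpha$ (Euler–Lagrange equations). Equivalently, $\kappa=\alpha\langle\mathbf n,\xi\rangle/\mathsf d$, with $\mathbf n=(\gamma'\times\gamma)/|\gamma'|$, $\kappa=\langle\gamma'',\mathbf n\rangle/|\gamma'|^2$, and $\xi=\Psi_u$. Throughout the paper, $\alpha\ne0$. *)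

theory Defs
  imports "HOL-Analysis.Analysis" "HOL-Analysis.Cross3"
begin

definition Npole :: "real^3" where
  "Npole = vector [0, 0, 1]"

definition dN :: "real^3 \<Rightarrow> real" where
  "dN p = arccos (p \<bullet> Npole)"

text \<open>xi = Psi_u written intrinsically: at p = Psi(u,v) with 0 < u < pi,
  Psi_u = (<p,N> p - N) / sin u, and sin u = sqrt(1 - <p,N>^2).\<close>
definition xi :: "real^3 \<Rightarrow> real^3" where
  "xi p = (1 / sqrt (1 - (p \<bullet> Npole)\<^sup>2)) *\<^sub>R ((p \<bullet> Npole) *\<^sub>R p - Npole)"

definition vel :: "(real \<Rightarrow> real^3) \<Rightarrow> real \<Rightarrow> real^3" where
  "vel \<gamma> t = vector_derivative \<gamma> (at t)"

definition acc :: "(real \<Rightarrow> real^3) \<Rightarrow> real \<Rightarrow> real^3" where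
  "acc \<gamma> t = vector_derivative (vel \<gamma>) (at t)"

definition nrm :: "(real \<Rightarrow> real^3) \<Rightarrow> real \<Rightarrow> real^3" where
  "nrm \<gamma> t = (1 / norm (vel \<gamma> t)) *\<^sub>R cross3 (vel \<gamma> t) (\<gamma> t)"

definition curv :: "(real \<Rightarrow> real^3) \<Rightarrow> real \<Rightarrow> real" where
  "curv \<gamma> t = (acc \<gamma> t \<bullet> nrm \<gamma> t) / (norm (vel \<gamma> t))\<^sup>2"

definition immersed_sphere_curve :: "(real \<Rightarrow> real^3) \<Rightarrow> real set \<Rightarrow> bool" where
  "immersed_sphere_curve \<gamma> I \<longleftrightarrow>
     open I \<and> is_interval I \<and> I \<noteq> {} \<and>
     (\<forall>t\<in>I. norm (\<gamma> t) = 1 \<and> \<gamma> t \<noteq> Npole) \<and>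
     (\<forall>t\<in>I. \<gamma> differentiable (at t)) \<and>
     (\<forall>t\<in>I. vel \<gamma> differentiable (at t)) \<and>
     continuous_on I (acc \<gamma>) \<and>
     (\<forall>t\<in>I. vel \<gamma> t \<noteq> 0)"

definition properly_immersed :: "(real \<Rightarrow> real^3) \<Rightarrow> real set \<Rightarrow> bool" where
  "properly_immersed \<gamma> I \<longleftrightarrow> immersed_sphere_curve \<gamma> I \<and>
     ((I = UNIV \<and> (\<exists>T>0. \<forall>t. \<gamma> (t + T) = \<gamma> t)) \<or>
      (\<forall>K. compact K \<and> K \<subseteq> sphere 0 1 - {Npole} \<longrightarrow> compact {t\<in>I. \<gamma> t \<in> K}))"

text \<open>alpha-stationary: kappa = alpha <n, xi> / d, at every point where xi is defined
  (i.e. away from the south pole).\<close>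
definition alpha_stationary :: "real \<Rightarrow> (real \<Rightarrow> real^3) \<Rightarrow> real set \<Rightarrow> bool" where
  "alpha_stationary \<alpha> \<gamma> I \<longleftrightarrow>
     (\<forall>t\<in>I. \<gamma> t \<noteq> - Npole \<longrightarrow>
        curv \<gamma> t = \<alpha> * (nrm \<gamma> t \<bullet> xi (\<gamma> t)) / dN (\<gamma> t))"

end

theory Submission
  imports Defs
begin

text \<open>A proper map from an open interval would have compact domain once its image avoids a
  neighbourhood of \<open>N\<close>, so \<open>\<gamma>\<close> is a closed curve and its height \<open>\<langle>\<gamma>, N\<rangle>\<close> attains a positive
  maximum at some \<open>t\<^sub>0\<close>. There \<open>\<gamma>\<close> is tangent to the parallel at distance \<open>u \<in> (0, \<pi>/2)\<close> from
  \<open>N\<close>, so \<open>\<langle>n, \<xi>\<rangle> = \<plusminus>1\<close>, and since \<open>\<gamma>\<close> stays below this parallel, \<open>\<kappa> \<langle>n, \<xi>\<rangle> \<ge> - cot u\<close>.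
  Stationarity gives \<open>\<kappa> \<langle>n, \<xi>\<rangle> = \<alpha> / u\<close>, hence \<open>\<alpha> \<ge> - u cot u > -1\<close>.\<close>

lemma has_real_derivative_inner:
  fixes f g :: "real \<Rightarrow> 'a::real_inner"
  assumes "(f has_vector_derivative f') (at t)" "(g has_vector_derivative g') (at t)"
  shows "((\<lambda>t. f t \<bullet> g t) has_real_derivative f t \<bullet> g' + f' \<bullet> g t) (at t)"
proof -
  have "((\<lambda>t. f t \<bullet> g t) has_derivative (\<lambda>h. f t \<bullet> (h *\<^sub>R g') + (h *\<^sub>R f') \<bullet> g t)) (at t)"
    using assms unfolding has_vector_derivative_def by (intro has_derivative_inner)
  moreover have "(\<lambda>h. f t \<bullet> (h *\<^sub>R g') + (h *\<^sub>R f') \<bullet> g t) = (*) (f t \<bullet> g' + f' \<bullet> g t)"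
    by (auto simp: fun_eq_iff algebra_simps)
  ultimately show ?thesis
    unfolding has_field_derivative_def by simp
qed

lemma derivative_inner_const_eq_0:
  fixes f g :: "real \<Rightarrow> 'a::real_inner"
  assumes "\<And>t. f t \<bullet> g t = c"
    and "(f has_vector_derivative f') (at t)" "(g has_vector_derivative g') (at t)"
  shows "f t \<bullet> g' + f' \<bullet> g t = 0"
proof -
  have "((\<lambda>t. f t \<bullet> g t) has_real_derivative 0) (at t)"
    using assms(1) by simp
  with has_real_derivative_inner[OF assms(2,3)] show ?thesis
    by (rule DERIV_unique)
qed

lemma mult_cos_less_sin:
  fixes x :: real
  assumes "0 < x" "x < pi / 2"
  shows "x * cos x < sin x"
proof -
  have "(\<lambda>x. sin x - x * cos x) 0 < (\<lambda>x. sin x - x * cos x) x"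
  proof (rule DERIV_pos_imp_increasing_open[OF assms(1)])
    fix y
    assume y: "0 < y" "y < x"
    then have "0 < y * sin y"
      using sin_gt_zero[of y] assms pi_gt3 by simp
    moreover have "DERIV (\<lambda>x. sin x - x * cos x) y :> y * sin y"
      by (auto intro!: derivative_eq_intros)
    ultimately show "\<exists>d. DERIV (\<lambda>x. sin x - x * cos x) y :> d \<and> d > 0"
      by blast
  qed (intro continuous_intros)
  then show ?thesis
    by simp
qed

lemma periodic_shift_int:
  assumes "\<And>t. f (t + T) = f t"
  shows "f (t + of_int k * T) = f t"
proof (induction k rule: int_induct[where k = 0])
  case (step1 i)
  then show ?case
    using assms[of "t + of_int i * T"] by (simp add: algebra_simps)
next
  case (step2 i)
  then show ?case
    using assms[of "t + of_int (i - 1) * T"] by (simp add: algebra_simps)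
qed simp

lemma continuous_periodic_attains_max:
  fixes f :: "real \<Rightarrow> real"
  assumes "continuous_on UNIV f" "T > 0" "\<And>t. f (t + T) = f t"
  obtains x where "\<And>y. f y \<le> f x"
proof -
  have "continuous_on {0..T} f"
    using assms(1) by (rule continuous_on_subset) simp
  then obtain x where x: "\<forall>y\<in>{0..T}. f y \<le> f x"
    using continuous_attains_sup[of "{0..T}" f] assms(2) by auto
  have "f y \<le> f x" for y
  proof -
    define k where "k = \<lfloor>y / T\<rfloor>"
    have "of_int k * T \<le> y" "y < (of_int k + 1) * T"
      using floor_divide_lower[OF assms(2)] floor_divide_upper[OF assms(2)] unfolding k_def by auto
    then have "y - of_int k * T \<in> {0..T}"
      by (simp add: distrib_right)
    moreover have "f y = f (y - of_int k * T)"
      using periodic_shift_int[of f T, OF assms(3), of "y - of_int k * T" k] by simp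
    ultimately show ?thesis
      using x by simp
  qed
  then show thesis
    using that by blast
qed

lemma DERIV_max_second_derivative_nonpos:
  fixes f f' :: "real \<Rightarrow> real"
  assumes max: "\<And>y. f y \<le> f x"
    and f': "\<And>y. (f has_real_derivative f' y) (at y)"
    and f'': "(f' has_real_derivative D) (at x)"
  shows "D \<le> 0"
proof (rule ccontr)
  assume "\<not> D \<le> 0"
  then obtain e where e: "e > 0" "\<And>h. 0 < h \<Longrightarrow> h < e \<Longrightarrow> f' x < f' (x + h)"
    using DERIV_pos_inc_right[OF f''] by auto
  have "f' x = 0"
    using DERIV_local_max[OF f' zero_less_one] max by blast
  have "f x < f (x + e / 2)"
  proof (rule DERIV_pos_imp_increasing_open[of x "x + e / 2" f])
    fix y
    assume "x < y" "y < x + e / 2"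
    then have "0 < f' y"
      using e(2)[of "y - x"] \<open>f' x = 0\<close> by simp
    then show "\<exists>d. (f has_real_derivative d) (at y) \<and> 0 < d"
      using f' by blast
  next
    show "continuous_on {x..x + e / 2} f"
      using f' by (meson DERIV_isCont continuous_at_imp_continuous_on)
  qed (use e in simp)
  with max show False
    by (simp add: not_less[symmetric])
qed

lemma inner_less_1_if_unit_neq:
  fixes x y :: "'a::real_inner"
  assumes "norm x = 1" "norm y = 1" "x \<noteq> y"
  shows "x \<bullet> y < 1"
proof -
  have "0 < (x - y) \<bullet> (x - y)"
    using assms(3) by simp
  also have "\<dots> = 2 - 2 * (x \<bullet> y)"
    using assms(1,2) by (simp add: inner_diff inner_commute norm_eq_1)
  finally show ?thesis
    by simp
qed

lemma sphere_curve_inner_derivatives: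
  fixes \<gamma> \<gamma>' :: "real \<Rightarrow> 'a::real_inner"
  assumes "\<And>t. norm (\<gamma> t) = 1"
    and "\<And>t. (\<gamma> has_vector_derivative \<gamma>' t) (at t)"
    and "(\<gamma>' has_vector_derivative \<gamma>'') (at t)"
  shows "\<gamma> t \<bullet> \<gamma>' t = 0" and "\<gamma> t \<bullet> \<gamma>'' = - (\<gamma>' t \<bullet> \<gamma>' t)"
proof -
  have "\<gamma> s \<bullet> \<gamma> s = 1" for s
    using assms(1) norm_eq_1 by blast
  from derivative_inner_const_eq_0[OF this assms(2,2)]
  have tangent: "\<gamma> s \<bullet> \<gamma>' s = 0" for s
    by (simp add: inner_commute)
  then show "\<gamma> t \<bullet> \<gamma>' t = 0" .
  from derivative_inner_const_eq_0[OF tangent assms(2,3)]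
  show "\<gamma> t \<bullet> \<gamma>'' = - (\<gamma>' t \<bullet> \<gamma>' t)"
    by simp
qed

lemma inner_cross3_mult_inner_cross3:
  fixes a b v p :: "real^3"
  shows "(a \<bullet> cross3 v p) * (b \<bullet> cross3 v p) =
    (a \<bullet> b) * ((v \<bullet> v) * (p \<bullet> p) - (v \<bullet> p) * (p \<bullet> v))
    - (a \<bullet> v) * ((v \<bullet> b) * (p \<bullet> p) - (v \<bullet> p) * (p \<bullet> b))
    + (a \<bullet> p) * ((v \<bullet> b) * (p \<bullet> v) - (v \<bullet> v) * (p \<bullet> b))"
  by (simp add: cross3_def inner_vec_def sum_3 algebra_simps)

lemma norm_Npole: "norm Npole = 1"
  by (simp add: Npole_def norm_vec_def L2_set_def sum_3)

lemma curv_nrm_xi_at_horizontal_tangent: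
  fixes \<gamma> :: "real \<Rightarrow> real^3"
  assumes unit: "norm (\<gamma> t) = 1"
    and tangent: "\<gamma> t \<bullet> vel \<gamma> t = 0"
    and normal_acc: "\<gamma> t \<bullet> acc \<gamma> t = - (vel \<gamma> t \<bullet> vel \<gamma> t)"
    and regular: "vel \<gamma> t \<noteq> 0"
    and horizontal: "vel \<gamma> t \<bullet> Npole = 0"
    and height: "\<bar>\<gamma> t \<bullet> Npole\<bar> < 1"
  shows "(nrm \<gamma> t \<bullet> xi (\<gamma> t))\<^sup>2 = 1"
    and "curv \<gamma> t * (nrm \<gamma> t \<bullet> xi (\<gamma> t)) =
      - (acc \<gamma> t \<bullet> Npole / (norm (vel \<gamma> t))\<^sup>2 + \<gamma> t \<bullet> Npole) / sqrt (1 - (\<gamma> t \<bullet> Npole)\<^sup>2)"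
proof -
  define p v a where "p = \<gamma> t" and "v = vel \<gamma> t" and "a = acc \<gamma> t"
  define c V h s where "c = cross3 v p" and "V = norm v" and "h = p \<bullet> Npole"
    and "s = sqrt (1 - h\<^sup>2)"
  have V: "V > 0" and vv: "v \<bullet> v = V\<^sup>2"
    using regular unfolding V_def v_def by (simp_all add: power2_norm_eq_inner)
  have "h\<^sup>2 < 1"
    using height unfolding h_def p_def by (simp add: abs_square_less_1)
  then have s: "s > 0" and s2: "s\<^sup>2 = 1 - h\<^sup>2"
    unfolding s_def by simp_all
  have pp: "p \<bullet> p = 1" and NN: "Npole \<bullet> Npole = 1"
    using unit norm_Npole unfolding p_def by (simp_all add: norm_eq_1)
  have "c \<bullet> p = 0"
    unfolding c_def by (simp add: dot_cross_self)
  then have \<sigma>: "nrm \<gamma> t \<bullet> xi (\<gamma> t) = - (Npole \<bullet> c) / (V * s)"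
    unfolding nrm_def xi_def v_def[symmetric] p_def[symmetric] c_def[symmetric]
      V_def[symmetric] h_def[symmetric] s_def[symmetric]
    by (simp add: inner_diff_right inner_commute)
  have \<kappa>: "curv \<gamma> t = (a \<bullet> c) / V ^ 3"
    unfolding curv_def nrm_def a_def[symmetric] v_def[symmetric] p_def[symmetric]
      c_def[symmetric] V_def[symmetric]
    by (simp add: power3_eq_cube power2_eq_square)
  have G1: "(a \<bullet> c) * (Npole \<bullet> c) = V\<^sup>2 * (a \<bullet> Npole + V\<^sup>2 * h)"
    using pp vv tangent normal_acc horizontal
    unfolding c_def inner_cross3_mult_inner_cross3 h_def p_def v_def a_def
    by (simp add: inner_commute algebra_simps)
  have G2: "(Npole \<bullet> c)\<^sup>2 = V\<^sup>2 * s\<^sup>2"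
    unfolding s2 using pp vv tangent horizontal NN inner_cross3_mult_inner_cross3[of Npole v p Npole]
    unfolding c_def h_def p_def v_def
    by (simp add: inner_commute algebra_simps power2_eq_square)
  show "(nrm \<gamma> t \<bullet> xi (\<gamma> t))\<^sup>2 = 1"
    using G2 V s unfolding \<sigma> by (simp add: power_divide power_mult_distrib)
  have "curv \<gamma> t * (nrm \<gamma> t \<bullet> xi (\<gamma> t)) = - ((a \<bullet> c) * (Npole \<bullet> c)) / (V ^ 4 * s)"
    unfolding \<kappa> \<sigma> by (simp add: field_simps power3_eq_cube power4_eq_xxxx)
  also have "\<dots> = - (a \<bullet> Npole / V\<^sup>2 + h) / s"
    unfolding G1 using V s by (simp add: field_simps power4_eq_xxxx power2_eq_square)
  finally show "curv \<gamma> t * (nrm \<gamma> t \<bullet> xi (\<gamma> t)) =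
      - (acc \<gamma> t \<bullet> Npole / (norm (vel \<gamma> t))\<^sup>2 + \<gamma> t \<bullet> Npole) / sqrt (1 - (\<gamma> t \<bullet> Npole)\<^sup>2)"
    unfolding a_def V_def v_def h_def s_def p_def .
qed

lemma alpha_gt_minus_1_at_height_max:
  fixes \<gamma> :: "real \<Rightarrow> real^3"
  assumes stationary: "curv \<gamma> t = \<alpha> * (nrm \<gamma> t \<bullet> xi (\<gamma> t)) / dN (\<gamma> t)"
    and unit: "norm (\<gamma> t) = 1"
    and tangent: "\<gamma> t \<bullet> vel \<gamma> t = 0"
    and normal_acc: "\<gamma> t \<bullet> acc \<gamma> t = - (vel \<gamma> t \<bullet> vel \<gamma> t)"
    and regular: "vel \<gamma> t \<noteq> 0"
    and horizontal: "vel \<gamma> t \<bullet> Npole = 0"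
    and below: "acc \<gamma> t \<bullet> Npole \<le> 0"
    and height: "0 < \<gamma> t \<bullet> Npole" "\<gamma> t \<bullet> Npole < 1"
  shows "\<alpha> > -1"
proof -
  define h u s where "h = \<gamma> t \<bullet> Npole" and "u = dN (\<gamma> t)" and "s = sqrt (1 - h\<^sup>2)"
  define \<sigma> where "\<sigma> = nrm \<gamma> t \<bullet> xi (\<gamma> t)"
  have u: "u = arccos h"
    unfolding u_def h_def dN_def ..
  have cos_u: "cos u = h" and sin_u: "sin u = s"
    using height unfolding u s_def h_def by (simp_all add: sin_arccos_abs)
  have "0 < u" "u < pi / 2"
    using height arccos_lt_bounded[of h] arccos_less_arccos[of 0 h] unfolding u h_def by simp_all
  then have "u * h < s"
    using mult_cos_less_sin cos_u sin_u by metis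
  have s: "s > 0"
    using height unfolding s_def h_def by (simp add: power2_less_1_iff abs_less_iff)
  have "\<bar>\<gamma> t \<bullet> Npole\<bar> < 1"
    using height by simp
  note horizontal_tangent = curv_nrm_xi_at_horizontal_tangent[OF unit tangent normal_acc regular horizontal this]
  have "\<alpha> / u = curv \<gamma> t * \<sigma>"
    using stationary horizontal_tangent(1) unfolding \<sigma>_def u_def
    by (simp add: power2_eq_square)
  also have "\<dots> = - (acc \<gamma> t \<bullet> Npole / (norm (vel \<gamma> t))\<^sup>2 + h) / s"
    using horizontal_tangent(2) unfolding \<sigma>_def h_def s_def .
  also have "\<dots> \<ge> - h / s"
  proof -
    have "acc \<gamma> t \<bullet> Npole / (norm (vel \<gamma> t))\<^sup>2 \<le> 0"
      using below by (simp add: divide_nonpos_nonneg)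
    then show ?thesis
      using s by (intro divide_right_mono) auto
  qed
  finally have "- (u * h) \<le> \<alpha> * s"
    using \<open>0 < u\<close> s by (simp add: field_simps)
  with \<open>u * h < s\<close> have "-1 * s < \<alpha> * s"
    by simp
  then show ?thesis
    using mult_less_cancel_right_pos[OF s] by blast
qed

lemma properly_immersed_periodic:
  assumes "properly_immersed \<gamma> I" and "Npole \<notin> closure (\<gamma> ` I)"
  shows "I = UNIV \<and> (\<exists>T>0. \<forall>t. \<gamma> (t + T) = \<gamma> t)"
proof (rule ccontr)
  assume "\<not> ?thesis"
  then have proper: "\<And>K. compact K \<Longrightarrow> K \<subseteq> sphere 0 1 - {Npole} \<Longrightarrow> compact {t\<in>I. \<gamma> t \<in> K}"
    using assms(1) unfolding properly_immersed_def by blast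
  have I: "open I" "I \<noteq> {}" and on_sphere: "\<gamma> ` I \<subseteq> sphere 0 1"
    using assms(1) unfolding properly_immersed_def immersed_sphere_curve_def by auto
  have "compact (closure (\<gamma> ` I))"
    unfolding compact_closure using on_sphere by (rule bounded_subset[OF bounded_sphere])
  moreover have "closure (\<gamma> ` I) \<subseteq> sphere 0 1"
    using on_sphere by (rule closure_minimal[OF _ closed_sphere])
  then have "closure (\<gamma> ` I) \<subseteq> sphere 0 1 - {Npole}"
    using assms(2) by blast
  ultimately have "compact {t\<in>I. \<gamma> t \<in> closure (\<gamma> ` I)}"
    by (rule proper)
  moreover have "{t\<in>I. \<gamma> t \<in> closure (\<gamma> ` I)} = I"
    using closure_subset[of "\<gamma> ` I"] by auto
  ultimately have "compact I"
    by simp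
  then have "closed I"
    by (rule compact_imp_closed)
  with I have "I = UNIV"
    using clopen[of I] by simp
  with \<open>compact I\<close> show False
    using compact_imp_bounded by fastforce
qed

theorem theorem3p5:
  fixes \<alpha> :: real and \<gamma> :: "real \<Rightarrow> real^3" and I :: "real set"
  assumes "\<alpha> \<noteq> 0"
    and "properly_immersed \<gamma> I"
    and "alpha_stationary \<alpha> \<gamma> I"
    and "Npole \<notin> closure (\<gamma> ` I)"
    and "\<exists>t\<in>I. \<gamma> t \<bullet> Npole > 0"
  shows "\<alpha> > -1"
proof -
  obtain T where "T > 0" and periodic: "\<And>t. \<gamma> (t + T) = \<gamma> t" and "I = UNIV"
    using properly_immersed_periodic[OF assms(2,4)] by blast
  then have curve: "immersed_sphere_curve \<gamma> UNIV"
    using assms(2) unfolding properly_immersed_def by simp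
  then have unit: "norm (\<gamma> t) = 1" and "\<gamma> t \<noteq> Npole" and regular: "vel \<gamma> t \<noteq> 0"
    and D\<gamma>: "(\<gamma> has_vector_derivative vel \<gamma> t) (at t)"
    and Dvel: "(vel \<gamma> has_vector_derivative acc \<gamma> t) (at t)" for t
    unfolding immersed_sphere_curve_def vel_def acc_def
    by (simp_all add: vector_derivative_works[symmetric])
  define height where "height t = \<gamma> t \<bullet> Npole" for t
  have Dheight: "(height has_real_derivative vel \<gamma> t \<bullet> Npole) (at t)"
    and Dheight': "((\<lambda>t. vel \<gamma> t \<bullet> Npole) has_real_derivative acc \<gamma> t \<bullet> Npole) (at t)" for t
    using has_real_derivative_inner[OF D\<gamma> has_vector_derivative_const]
      has_real_derivative_inner[OF Dvel has_vector_derivative_const]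
    unfolding height_def by simp_all
  have "continuous_on UNIV height"
    using Dheight by (meson DERIV_isCont continuous_at_imp_continuous_on)
  then obtain t0 where max: "\<And>t. height t \<le> height t0"
    using continuous_periodic_attains_max[of height T] \<open>T > 0\<close> periodic
    unfolding height_def by metis
  have "0 < height t0"
    using assms(5) max less_le_trans unfolding height_def by blast
  moreover have "height t0 < 1"
    using inner_less_1_if_unit_neq[OF unit norm_Npole \<open>\<gamma> t0 \<noteq> Npole\<close>] unfolding height_def .
  moreover have "vel \<gamma> t0 \<bullet> Npole = 0"
    using DERIV_local_max[OF Dheight zero_less_one] max by blast
  moreover have "acc \<gamma> t0 \<bullet> Npole \<le> 0"
    using DERIV_max_second_derivative_nonpos[OF max Dheight Dheight'] .
  moreover have "\<gamma> t0 \<noteq> - Npole"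
    using \<open>0 < height t0\<close> norm_Npole unfolding height_def by (auto simp: norm_eq_1)
  then have "curv \<gamma> t0 = \<alpha> * (nrm \<gamma> t0 \<bullet> xi (\<gamma> t0)) / dN (\<gamma> t0)"
    using assms(3) \<open>I = UNIV\<close> unfolding alpha_stationary_def by blast
  ultimately show ?thesis
    using alpha_gt_minus_1_at_height_max sphere_curve_inner_derivatives[OF unit D\<gamma> Dvel] unit regular
    unfolding height_def by blast
qed

end
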